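(* Let $\sigma$ be a term ordering on $\mathbb{T}^n$. Let $T=(t_1,\dots,t_r)$ be an interreduced $\sigma$-ordered tuple of elements of $\mathbb{T}^n$, and let $T'$ be a set of elements of $\mathbb{T}^n$. Assume there exist $t'\in T'$ and an index $k\in\{1,\dots,r\}$ such that $t_1,\dots,t_{k-1}\in T'$, $t_k>_\sigma t'$, and $t'$ is not divisible by any $t_i$ in $T$. Then $O_\sigma(T')\prec_\sigma T$, and $T$ is not a proper prefix of $O_\sigma(T')$.
   Context: $\mathbb{T}^n$ is the monoid of power-products in $x_1,\dots,x_n$. A tuple $(t_1,\dots,t_r)$ of distinct power-products is $\sigma$-ordered if $t_1<_\sigma\cdots<_\sigma t_r$. The interreduction of a set $S$ of power-products is the set of elements of $S$ not divisible by any other element of $S$; $S$ (or a tuple) is interreduced if it equals its interreduction. For a set $T'$ of power-products, $O_\sigma(T')$ is the $\sigma$-ordered tuple of the interreduction of $T'$. For $\sigma$-ordered tuples $T=(t_1,\dots,t_r)$ and $T'=(t'_1,\dots,t'_{r'})$, $T'\prec_\sigma T$ means either $T$ is a proper prefix of $T'$ (i.e. $r<r'$ and $t_i=t'_i$ for $i\le r$), or there is $k\le\min(r,r')$ with $t_i=t'_i$ for $i<k$ and $t'_k<_\sigma t_k$. *)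

theory Defs
  imports Main
begin

text \<open>Power-products in the variables indexed by a finite type 'v (so n = CARD('v)):
  a power-product is its exponent vector 'v \<Rightarrow> nat.\<close>

type_synonym 'v pp = "'v \<Rightarrow> nat"

definition pp_one :: "'v pp" where "pp_one = (\<lambda>_. 0)"

definition pp_mult :: "'v pp \<Rightarrow> 'v pp \<Rightarrow> 'v pp" where
  "pp_mult s t = (\<lambda>i. s i + t i)"

definition pp_dvd :: "'v pp \<Rightarrow> 'v pp \<Rightarrow> bool" where
  "pp_dvd s t \<longleftrightarrow> (\<exists>u. t = pp_mult s u)"

definition term_ordering :: "('v pp \<Rightarrow> 'v pp \<Rightarrow> bool) \<Rightarrow> bool" where
  "term_ordering le \<longleftrightarrow>
     (\<forall>t. le t t) \<and>
     (\<forall>s t. le s t \<and> le t s \<longrightarrow> s = t) \<and>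
     (\<forall>s t u. le s t \<and> le t u \<longrightarrow> le s u) \<and>
     (\<forall>s t. le s t \<or> le t s) \<and>
     (\<forall>t. le pp_one t) \<and>
     (\<forall>s t u. le s t \<longrightarrow> le (pp_mult s u) (pp_mult t u))"

definition strict :: "('v pp \<Rightarrow> 'v pp \<Rightarrow> bool) \<Rightarrow> 'v pp \<Rightarrow> 'v pp \<Rightarrow> bool" where
  "strict le s t \<longleftrightarrow> le s t \<and> s \<noteq> t"

definition sigma_ordered :: "('v pp \<Rightarrow> 'v pp \<Rightarrow> bool) \<Rightarrow> 'v pp list \<Rightarrow> bool" where
  "sigma_ordered le T \<longleftrightarrow> sorted_wrt (strict le) T"

definition interreduction :: "'v pp set \<Rightarrow> 'v pp set" where
  "interreduction S = {t \<in> S. \<forall>s\<in>S. s \<noteq> t \<longrightarrow> \<not> pp_dvd s t}"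

definition interreduced_tuple :: "'v pp list \<Rightarrow> bool" where
  "interreduced_tuple T \<longleftrightarrow> interreduction (set T) = set T"

definition O_sigma :: "('v pp \<Rightarrow> 'v pp \<Rightarrow> bool) \<Rightarrow> 'v pp set \<Rightarrow> 'v pp list" where
  "O_sigma le T' = (THE L. sigma_ordered le L \<and> set L = interreduction T')"

definition proper_prefix :: "'a list \<Rightarrow> 'a list \<Rightarrow> bool" where
  "proper_prefix T T' \<longleftrightarrow> length T < length T' \<and> (\<forall>i<length T. T ! i = T' ! i)"

text \<open>tuple_prec le T' T  is  T' \<prec>_sigma T  (indices 0-based).\<close>

definition tuple_prec :: "('v pp \<Rightarrow> 'v pp \<Rightarrow> bool) \<Rightarrow> 'v pp list \<Rightarrow> 'v pp list \<Rightarrow> bool" where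
  "tuple_prec le T' T \<longleftrightarrow>
     proper_prefix T T' \<or>
     (\<exists>k < min (length T) (length T').
        (\<forall>i<k. T ! i = T' ! i) \<and> strict le (T' ! k) (T ! k))"

end

theory Submission
  imports Defs "HOL.Topological_Spaces"
begin

text \<open>
  Let \<open>m\<close> be the first position where \<open>O\<^sub>\<sigma>(T')\<close> and \<open>T\<close> differ, capped at \<open>k\<close>.
  The power-product \<open>w = t\<^sub>m\<close> (if \<open>m < k\<close>) or \<open>w = t'\<close> (if \<open>m = k\<close>) lies in \<open>T'\<close>
  and is not divisible by \<open>t\<^sub>1, \<dots>, t\<^sub>m\<^sub>-\<^sub>1\<close>, the first entries of \<open>O\<^sub>\<sigma>(T')\<close>. Some minimal
  element of \<open>T'\<close> divides \<open>w\<close>; it is an entry of \<open>O\<^sub>\<sigma>(T')\<close> at a position \<open>\<ge> m\<close>, so the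
  \<open>m\<close>-th entry of \<open>O\<^sub>\<sigma>(T')\<close> exists and is \<open>\<le>\<^sub>\<sigma> w \<le>\<^sub>\<sigma> t\<^sub>m\<close>. The inequality is strict: for
  \<open>m < k\<close> because the tuples differ at \<open>m\<close>, for \<open>m = k\<close> because \<open>t' <\<^sub>\<sigma> t\<^sub>k\<close>.
  That \<open>O\<^sub>\<sigma>(T')\<close> is a well-defined finite tuple rests on Dickson's lemma.
\<close>

lemma pp_dvd_iff_le: "pp_dvd s t \<longleftrightarrow> (\<forall>v. s v \<le> t v)"
proof
  assume "pp_dvd s t"
  then show "\<forall>v. s v \<le> t v" by (auto simp: pp_dvd_def pp_mult_def)
next
  assume "\<forall>v. s v \<le> t v"
  then have "t = pp_mult s (\<lambda>v. t v - s v)" by (auto simp: pp_mult_def)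
  then show "pp_dvd s t" unfolding pp_dvd_def by blast
qed

lemma pp_dvd_refl: "pp_dvd t t"
  by (simp add: pp_dvd_iff_le)

lemma pp_dvd_trans: "pp_dvd s t \<Longrightarrow> pp_dvd t u \<Longrightarrow> pp_dvd s u"
  by (meson order_trans pp_dvd_iff_le)

definition pp_deg :: "('v::finite) pp \<Rightarrow> nat" where
  "pp_deg t = (\<Sum>v\<in>UNIV. t v)"

lemma pp_deg_less_if_proper_dvd:
  assumes "pp_dvd s t" and "s \<noteq> t"
  shows "pp_deg s < pp_deg (t :: ('v::finite) pp)"
proof -
  have le: "\<forall>v. s v \<le> t v" using assms(1) by (simp add: pp_dvd_iff_le)
  with assms(2) obtain v where "s v < t v" by (meson ext le_neq_implies_less)
  with le show ?thesis unfolding pp_deg_def by (intro sum_strict_mono_ex1) auto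
qed

lemma nat_seq_incseq_subseq:
  fixes s :: "nat \<Rightarrow> nat"
  obtains r where "strict_mono r" and "incseq (s \<circ> r)"
proof -
  obtain r where r: "strict_mono r" and "monoseq (s \<circ> r)"
    using seq_monosub[of s] by (auto simp: o_def)
  show thesis
  proof (cases "incseq (s \<circ> r)")
    case True
    with r that show ?thesis by blast
  next
    case False
    with \<open>monoseq (s \<circ> r)\<close> have dec: "decseq (s \<circ> r)" by (simp add: monoseq_iff)
    obtain n0 where n0: "\<forall>n. s (r n0) \<le> s (r n)"
      using ex_has_least_nat[of "\<lambda>_. True" 0 "s \<circ> r"] by auto
    \<comment> \<open>a non-increasing sequence of naturals is eventually constant\<close>
    have "s (r (n + n0)) = s (r n0)" for n
      using dec n0 by (metis comp_apply decseqD le_add2 le_antisym)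
    then have "incseq (s \<circ> (\<lambda>n. r (n + n0)))" by (simp add: incseq_def)
    moreover have "strict_mono (\<lambda>n. r (n + n0))" using r by (simp add: strict_mono_def)
    ultimately show ?thesis using that by blast
  qed
qed

lemma incseq_subseq_componentwise:
  fixes s :: "nat \<Rightarrow> 'v \<Rightarrow> nat"
  assumes "finite V"
  shows "\<exists>r. strict_mono r \<and> (\<forall>v\<in>V. incseq (\<lambda>n. s (r n) v))"
  using assms
proof (induction V rule: finite_induct)
  case empty
  show ?case by (auto intro: strict_mono_id)
next
  case (insert x V)
  then obtain r where r: "strict_mono r" "\<forall>v\<in>V. incseq (\<lambda>n. s (r n) v)" by blast
  obtain q where q: "strict_mono q" "incseq ((\<lambda>n. s (r n) x) \<circ> q)"
    using nat_seq_incseq_subseq[of "\<lambda>n. s (r n) x"] by blast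
  have "incseq (\<lambda>n. s (r (q n)) v)" if "v \<in> insert x V" for v
    using that q r by (auto simp: incseq_def o_def strict_mono_less_eq)
  moreover have "strict_mono (r \<circ> q)" using r q by (simp add: strict_mono_def)
  ultimately show ?case by auto
qed

lemma dickson_pp:
  fixes f :: "nat \<Rightarrow> ('v::finite) pp"
  obtains i j where "i < j" and "pp_dvd (f i) (f j)"
proof -
  obtain r where r: "strict_mono r" "\<forall>v. incseq (\<lambda>n. f (r n) v)"
    using incseq_subseq_componentwise[of "UNIV :: 'v set" f] by auto
  then have "pp_dvd (f (r 0)) (f (r 1))" by (simp add: pp_dvd_iff_le incseq_def)
  moreover have "r 0 < r 1" using r(1) by (simp add: strict_mono_def)
  ultimately show thesis using that by blast
qed

lemma finite_interreduction:
  fixes S :: "('v::finite) pp set"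
  shows "finite (interreduction S)"
proof (rule ccontr)
  assume "infinite (interreduction S)"
  then obtain f :: "nat \<Rightarrow> 'v pp" where f: "inj f" "range f \<subseteq> interreduction S"
    using infinite_countable_subset by blast
  obtain i j where "i < j" "pp_dvd (f i) (f j)" using dickson_pp by blast
  moreover have "f i \<noteq> f j" using \<open>i < j\<close> f(1) by (metis inj_eq less_irrefl)
  moreover have "f i \<in> S" and "f j \<in> interreduction S" using f(2) by (auto simp: interreduction_def)
  ultimately show False by (auto simp: interreduction_def)
qed

lemma interreduction_dvd:
  fixes S :: "('v::finite) pp set"
  assumes "t \<in> S"
  obtains s where "s \<in> interreduction S" and "pp_dvd s t"
proof -
  obtain s where s: "s \<in> S \<and> pp_dvd s t"
    and min: "\<forall>u. u \<in> S \<and> pp_dvd u t \<longrightarrow> pp_deg s \<le> pp_deg u"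
    using ex_has_least_nat[of "\<lambda>s. s \<in> S \<and> pp_dvd s t" t pp_deg] assms pp_dvd_refl by blast
  have "s \<in> interreduction S"
    unfolding interreduction_def
  proof (intro CollectI conjI ballI impI notI)
    fix u assume "u \<in> S" "u \<noteq> s" "pp_dvd u s"
    then show False using s min pp_deg_less_if_proper_dvd pp_dvd_trans by (meson not_le)
  qed (use s in blast)
  with s that show thesis by blast
qed

lemma
  assumes "term_ordering le"
  shows term_ordering_refl: "le t t"
    and term_ordering_antisym: "le s t \<Longrightarrow> le t s \<Longrightarrow> s = t"
    and term_ordering_trans: "le s t \<Longrightarrow> le t u \<Longrightarrow> le s u"
    and term_ordering_total: "le s t \<or> le t s"
    and term_ordering_one_le: "le pp_one t"
    and term_ordering_mult_right: "le s t \<Longrightarrow> le (pp_mult s u) (pp_mult t u)"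
  using assms unfolding term_ordering_def by blast+

lemma term_ordering_linorder:
  assumes "term_ordering le"
  shows "class.linorder le (strict le)"
proof
  show "strict le s t \<longleftrightarrow> le s t \<and> \<not> le t s" for s t
    using term_ordering_refl[OF assms] term_ordering_antisym[OF assms] by (auto simp: strict_def)
qed (use term_ordering_refl[OF assms] term_ordering_antisym[OF assms]
      term_ordering_trans[OF assms] term_ordering_total[OF assms] in blast)+

lemma term_ordering_le_strict_trans:
  assumes "term_ordering le" and "le s t" and "strict le t u"
  shows "strict le s u"
proof -
  have "le s u" using assms term_ordering_trans[OF assms(1)] by (simp add: strict_def)
  moreover have "s \<noteq> u"
  proof
    assume "s = u"
    with assms have "le t u" and "le u t" and "t \<noteq> u" by (simp_all add: strict_def)
    then show False using term_ordering_antisym[OF assms(1)] by blast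
  qed
  ultimately show ?thesis by (simp add: strict_def)
qed

lemma term_ordering_dvd_le:
  assumes "term_ordering le" and "pp_dvd s t"
  shows "le s t"
proof -
  obtain u where t: "t = pp_mult s u" using assms(2) unfolding pp_dvd_def by blast
  have "le pp_one u" by (rule term_ordering_one_le[OF assms(1)])
  then have "le (pp_mult pp_one s) (pp_mult u s)" by (rule term_ordering_mult_right[OF assms(1)])
  moreover have "pp_mult pp_one s = s" by (simp add: pp_mult_def pp_one_def)
  moreover have "pp_mult u s = t" by (simp add: t pp_mult_def add.commute)
  ultimately show ?thesis by simp
qed

lemma
  assumes "term_ordering le"
  shows sigma_ordered_O_sigma: "sigma_ordered le (O_sigma le S)"
    and set_O_sigma: "set (O_sigma le S) = interreduction (S :: ('v::finite) pp set)"
proof -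
  interpret linorder le "strict le" using term_ordering_linorder[OF assms] .
  have "\<exists>!L. sigma_ordered le L \<and> set L = interreduction S"
    unfolding sigma_ordered_def by (intro ex1_sorted_list_for_set_if_finite finite_interreduction)
  then have "sigma_ordered le (O_sigma le S) \<and> set (O_sigma le S) = interreduction S"
    unfolding O_sigma_def by (rule theI')
  then show "sigma_ordered le (O_sigma le S)" "set (O_sigma le S) = interreduction S" by auto
qed

lemma sigma_ordered_nth_le:
  assumes "term_ordering le" and "sigma_ordered le L" and "i \<le> j" and "j < length L"
  shows "le (L ! i) (L ! j)"
proof (cases "i = j")
  case True
  then show ?thesis using term_ordering_refl[OF assms(1)] by simp
next
  case False
  then have "strict le (L ! i) (L ! j)"
    using assms(2-4) unfolding sigma_ordered_def by (simp add: sorted_wrt_nth_less)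
  then show ?thesis by (simp add: strict_def)
qed

lemma interreduced_tuple_nth_not_dvd:
  assumes "sigma_ordered le T" and "interreduced_tuple T"
    and "i < length T" and "j < length T" and "i \<noteq> j"
  shows "\<not> pp_dvd (T ! i) (T ! j)"
proof -
  have "T ! i \<noteq> T ! j" if "i < j" "j < length T" for i j
    using sorted_wrt_nth_less[OF assms(1)[unfolded sigma_ordered_def] that]
    by (simp add: strict_def)
  then have "T ! i \<noteq> T ! j" using assms(3-5) by (metis linorder_neqE_nat)
  moreover have "T ! j \<in> interreduction (set T)"
    using assms(2,4) by (simp add: interreduced_tuple_def)
  ultimately show ?thesis using assms(3) by (auto simp: interreduction_def)
qed

lemma O_sigma_nth_le:
  fixes T' :: "('v::finite) pp set"
  assumes "term_ordering le" and "w \<in> T'"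
    and "\<And>i. i < m \<Longrightarrow> i < length (O_sigma le T') \<Longrightarrow> \<not> pp_dvd (O_sigma le T' ! i) w"
  shows "m < length (O_sigma le T') \<and> le (O_sigma le T' ! m) w"
proof -
  let ?L = "O_sigma le T'"
  obtain s where s: "s \<in> interreduction T'" "pp_dvd s w"
    using interreduction_dvd[OF assms(2)] .
  then obtain j where j: "j < length ?L" "?L ! j = s"
    using set_O_sigma[OF assms(1)] by (metis in_set_conv_nth)
  have "m \<le> j" using assms(3) j s(2) by (meson not_le)
  then have "le (?L ! m) s"
    using sigma_ordered_nth_le[OF assms(1) sigma_ordered_O_sigma[OF assms(1)]] j by metis
  moreover have "le s w" using term_ordering_dvd_le[OF assms(1) s(2)] .
  ultimately show ?thesis
    using term_ordering_trans[OF assms(1)] \<open>m \<le> j\<close> j(1) by (meson le_less_trans)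
qed

lemma first_difference_upto:
  "\<exists>m\<le>k. (\<forall>i<m. i < length L \<and> L ! i = T ! i) \<and> (m < k \<longrightarrow> \<not> (m < length L \<and> L ! m = T ! m))"
proof -
  define m where "m = (LEAST i. i = k \<or> \<not> (i < length L \<and> L ! i = T ! i))"
  have "m \<le> k" unfolding m_def by (rule Least_le) simp
  moreover have "\<forall>i<m. i < length L \<and> L ! i = T ! i"
    using not_less_Least[of _ "\<lambda>i. i = k \<or> \<not> (i < length L \<and> L ! i = T ! i)"]
    unfolding m_def by blast
  moreover have "m = k \<or> \<not> (m < length L \<and> L ! m = T ! m)"
    unfolding m_def by (rule LeastI[of _ k]) simp
  ultimately show ?thesis by auto
qed

lemma tuple_prec_if_first_difference:
  assumes "m < length L" and "m < length T" and "\<forall>i<m. L ! i = T ! i"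
    and "strict le (L ! m) (T ! m)"
  shows "tuple_prec le L T \<and> \<not> proper_prefix T L"
  using assms unfolding tuple_prec_def proper_prefix_def strict_def by auto

theorem lemma4p10:
  fixes le :: "('v::finite) pp \<Rightarrow> 'v pp \<Rightarrow> bool"
    and T :: "'v pp list" and T' :: "'v pp set"
  assumes "term_ordering le"
    and "sigma_ordered le T"
    and "interreduced_tuple T"
    and "\<exists>t'\<in>T'. \<exists>k<length T. (\<forall>i<k. T ! i \<in> T') \<and> strict le t' (T ! k)
            \<and> (\<forall>i<length T. \<not> pp_dvd (T ! i) t')"
  shows "tuple_prec le (O_sigma le T') T \<and> \<not> proper_prefix T (O_sigma le T')"
proof -
  obtain t' k where t': "t' \<in> T'" "k < length T" "\<forall>i<k. T ! i \<in> T'"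
    "strict le t' (T ! k)" "\<forall>i<length T. \<not> pp_dvd (T ! i) t'"
    using assms(4) by blast
  let ?L = "O_sigma le T'"
  obtain m where "m \<le> k" and agree: "\<forall>i<m. i < length ?L \<and> ?L ! i = T ! i"
    and differ: "m < k \<longrightarrow> \<not> (m < length ?L \<and> ?L ! m = T ! m)"
    using first_difference_upto[of k ?L T] by blast
  have "m < length T" using \<open>m \<le> k\<close> t'(2) by simp
  have below: "m < length ?L \<and> le (?L ! m) w" if "w \<in> T'" and "\<forall>i<m. \<not> pp_dvd (T ! i) w" for w
    using O_sigma_nth_le[OF assms(1) that(1)] that(2) agree by auto
  have "m < length ?L \<and> strict le (?L ! m) (T ! m)"
  proof (cases "m < k")
    case True
    then have "T ! m \<in> T'" using t'(3) by blast
    moreover have "\<forall>i<m. \<not> pp_dvd (T ! i) (T ! m)"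
      using interreduced_tuple_nth_not_dvd[OF assms(2,3) _ \<open>m < length T\<close>] \<open>m < length T\<close>
      by simp
    ultimately show ?thesis using below differ True by (auto simp: strict_def)
  next
    case False
    then have "m = k" using \<open>m \<le> k\<close> by simp
    have "\<forall>i<m. \<not> pp_dvd (T ! i) t'" using t'(5) \<open>m < length T\<close> by auto
    with below t'(1) have "m < length ?L" and "le (?L ! m) t'" by blast+
    with \<open>m = k\<close> t'(4) show ?thesis using term_ordering_le_strict_trans assms(1) by blast
  qed
  then show ?thesis
    using tuple_prec_if_first_difference[of m ?L T le] \<open>m < length T\<close> agree by simp
qed

end
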